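(* For every sequent $\Gamma\Rightarrow\Delta$ of $\mathtt{TPDL}$: if $\Gamma\Rightarrow\Delta$ is provable in the cyclic proof system $\mathtt{CGTPDL}$, then $M\models\Gamma\Rightarrow\Delta$ for every model $M$.
   Context: Fix sets $\mathsf{Prop}$ and $\mathsf{AtProg}$. $\mathtt{TPDL}$ formulas/programs: $\varphi ::= \bot \mid p \mid (\varphi\to\varphi) \mid [\pi]\varphi \mid [\pi]^{\leftarrow}\varphi$, $\pi ::= \alpha \mid \pi;\pi \mid \pi\cup\pi \mid \pi^{*} \mid \varphi?$. For a set $\Gamma$, $[\pi]\Gamma=\{[\pi]\varphi:\varphi\in\Gamma\}$, similarly $[\pi]^{\leftarrow}\Gamma$. A model is $M=(W,(R_\alpha),V)$, $W\neq\emptyset$, $R_\alpha\subseteq W\times W$, $V:W\to\mathcal P(\mathsf{Prop})$; $R_{\pi_0;\pi_1}$ composition, $R_{\pi_0\cup\pi_1}$ union, $R_{\pi^*}$ reflexive–transitive closure, $R_{\psi?}=\{(w,w):M,w\models\psi\}$; $M,w\not\models\bot$, $M,w\models p$ iff $p\in V(w)$, $\to$ classical, $M,w\models[\pi]\varphi$ iff $\varphi$ holds at all $v$ with $wR_\pi v$, $M,w\models[\pi]^{\leftarrow}\varphi$ iff $\varphi$ holds at all $v$ with $vR_\pi w$. A sequent $\Gamma\Rightarrow\Delta$ is a pair of finite sets of formulas; $M\models\Gamma\Rightarrow\Delta$ means at every state where all of $\Gamma$ hold some formula of $\Delta$ holds. Rules of $\mathtt{CGTPDL}$ (premises / conclusion):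 (Ax) / $\Gamma\Rightarrow\Delta$ with $\Gamma\cap\Delta\neq\emptyset$; ($\bot$) / $\Gamma,\bot\Rightarrow\Delta$; ($\to$L) $\Gamma\Rightarrow\varphi,\Delta$ and $\Gamma,\psi\Rightarrow\Delta$ / $\Gamma,\varphi\to\psi\Rightarrow\Delta$; ($\to$R) $\Gamma,\varphi\Rightarrow\psi,\Delta$ / $\Gamma\Rightarrow\varphi\to\psi,\Delta$; (Wk) $\Gamma\Rightarrow\Delta$ / $\Gamma'\Rightarrow\Delta'$ with $\Gamma\subseteq\Gamma',\Delta\subseteq\Delta'$; (Cut) $\Gamma\Rightarrow\varphi,\Delta$ and $\Gamma,\varphi\Rightarrow\Delta$ / $\Gamma\Rightarrow\Delta$; ($[\,]$) $\Gamma\Rightarrow\varphi,[\pi]^{\leftarrow}\Delta$ / $[\pi]\Gamma\Rightarrow[\pi]\varphi,\Delta$; ($[\,]^{\leftarrow}$) $\Gamma\Rightarrow\varphi,[\pi]\Delta$ / $[\pi]^{\leftarrow}\Gamma\Rightarrow[\pi]^{\leftarrow}\varphi,\Delta$; ($[;]$L) $\Gamma,[\pi_0][\pi_1]\varphi\Rightarrow\Delta$ / $\Gamma,[\pi_0;\pi_1]\varphi\Rightarrow\Delta$; ($[;]$R) $\Gamma\Rightarrow[\pi_0][\pi_1]\varphi,\Delta$ / $\Gamma\Rightarrow[\pi_0;\pi_1]\varphi,\Delta$; ($[\cup]$L) $\Gamma,[\pi_0]\varphi,[\pi_1]\varphi\Rightarrow\Delta$ / $\Gamma,[\pi_0\cup\pi_1]\varphi\Rightarrow\Delta$;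 ($[\cup]$R) $\Gamma\Rightarrow\Delta,[\pi_0]\varphi$ and $\Gamma\Rightarrow\Delta,[\pi_1]\varphi$ / $\Gamma\Rightarrow[\pi_0\cup\pi_1]\varphi,\Delta$; ($[*]$L) $\Gamma,\varphi,[\pi][\pi^*]\varphi\Rightarrow\Delta$ / $\Gamma,[\pi^*]\varphi\Rightarrow\Delta$; ($[?]$L) $\Gamma\Rightarrow\varphi,\Delta$ and $\Gamma,\psi\Rightarrow\Delta$ / $\Gamma,[\varphi?]\psi\Rightarrow\Delta$; ($[?]$R) $\Gamma,\varphi\Rightarrow\psi,\Delta$ / $\Gamma\Rightarrow[\varphi?]\psi,\Delta$; (C-s) $\Gamma\Rightarrow\varphi,\Delta$ and $\Gamma\Rightarrow[\pi][\pi^*]\varphi,\Delta$ / $\Gamma\Rightarrow[\pi^*]\varphi,\Delta$. The principal formula of a rule instance is the distinguished formula introduced in its conclusion. A pre-proof is a pair $(\mathcal D,\mathcal C)$: $\mathcal D$ is a finite tree of sequents in which each inner node with its children is an instance of a rule (conclusion/premises), and each leaf is either an instance of Ax or $\bot$ or a bud; $\mathcal C$ maps each bud to a companion, an inner node labelled by the same sequent. The derivation graph is obtained from $\mathcal D$ by identifying each bud with its companion. A path is a (finite or infinite) sequence of nodes $(\Gamma_i\Rightarrow\Delta_i)_i$ of this graph with each $\Gamma_{i+1}\Rightarrow\Delta_{i+1}$ a premise of the rule instance concluding $\Gamma_i\Rightarrow\Delta_i$. A trace following a path is a sequence of formulas $(\tau_i)$ with $\tau_i\in\Delta_i$ for all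 $i$ such that: if node $i$ concludes ($\to$R) with principal $\varphi\to\psi$, then either $\tau_i=\varphi\to\psi$ and $\tau_{i+1}=\psi$, or $\tau_{i+1}=\tau_i$; if it concludes ($[\,]$) with principal $[\pi]\varphi$ then $\tau_i=[\pi]\varphi$ and $\tau_{i+1}=\varphi$; if ($[\,]^{\leftarrow}$) with principal $[\pi]^{\leftarrow}\varphi$ then $\tau_i=[\pi]^{\leftarrow}\varphi$ and $\tau_{i+1}=\varphi$; if ($[;]$R) with principal $[\pi_0;\pi_1]\varphi$, either $\tau_i$ is it and $\tau_{i+1}=[\pi_0][\pi_1]\varphi$, or $\tau_{i+1}=\tau_i$; if ($[\cup]$R) with principal $[\pi_0\cup\pi_1]\varphi$ and the next node is the premise containing $[\pi_j]\varphi$, either $\tau_i$ is the principal formula and $\tau_{i+1}=[\pi_j]\varphi$, or $\tau_{i+1}=\tau_i$; if ($[?]$R) with principal $[\varphi?]\psi$, either $\tau_i$ is it and $\tau_{i+1}=\psi$, or $\tau_{i+1}=\tau_i$; if (C-s) with principal $[\pi^*]\varphi$ and next node the premise with $\varphi$, either $\tau_i=[\pi^*]\varphi$ and $\tau_{i+1}=\varphi$, or $\tau_{i+1}=\tau_i$; if (C-s) with next node the premise with $[\pi][\pi^*]\varphi$, either $\tau_i=[\pi^*]\varphi$ and $\tau_{i+1}=[\pi][\pi^*]\varphi$ (then $i$ is a progress point), or $\tau_{i+1}=\tau_i$; for every other rule, $\tau_{i+1}=\tau_i$. A trace is infinitely progressing if it has infinitely many progress points. The derivation graph satisfies the global trace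 condition if for every infinite path $(\Gamma_i\Rightarrow\Delta_i)_{i\ge0}$ there is $k$ and an infinitely progressing trace following $(\Gamma_i\Rightarrow\Delta_i)_{i\ge k}$. A $\mathtt{CGTPDL}$ proof of a sequent is a pre-proof with that sequent at the root whose derivation graph satisfies the global trace condition; the sequent is then provable in $\mathtt{CGTPDL}$. *)

theory Defs
  imports Main
begin

datatype ('p,'a) fm =
    Bot
  | Atom 'p
  | Imp "('p,'a) fm" "('p,'a) fm"
  | Box "('p,'a) pg" "('p,'a) fm"
  | BoxC "('p,'a) pg" "('p,'a) fm"
and ('p,'a) pg =
    At 'a
  | Seq "('p,'a) pg" "('p,'a) pg"
  | Ch "('p,'a) pg" "('p,'a) pg"
  | Star "('p,'a) pg"
  | Test "('p,'a) fm"

text \<open>A model with state set W = UNIV of type 'w (non-empty), relations for atomic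
  programs and a valuation.\<close>
type_synonym ('a,'p,'w) model = "('a \<Rightarrow> 'w rel) \<times> ('w \<Rightarrow> 'p set)"

primrec sat :: "('a,'p,'w) model \<Rightarrow> 'w \<Rightarrow> ('p,'a) fm \<Rightarrow> bool"
  and rel :: "('a,'p,'w) model \<Rightarrow> ('p,'a) pg \<Rightarrow> 'w rel" where
  "sat M w Bot = False"
| "sat M w (Atom p) = (p \<in> snd M w)"
| "sat M w (Imp \<phi> \<psi>) = (sat M w \<phi> \<longrightarrow> sat M w \<psi>)"
| "sat M w (Box \<pi> \<phi>) = (\<forall>v. (w,v) \<in> rel M \<pi> \<longrightarrow> sat M v \<phi>)"
| "sat M w (BoxC \<pi> \<phi>) = (\<forall>v. (v,w) \<in> rel M \<pi> \<longrightarrow> sat M v \<phi>)"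
| "rel M (At a) = fst M a"
| "rel M (Seq \<pi>0 \<pi>1) = rel M \<pi>0 O rel M \<pi>1"
| "rel M (Ch \<pi>0 \<pi>1) = rel M \<pi>0 \<union> rel M \<pi>1"
| "rel M (Star \<pi>) = (rel M \<pi>)\<^sup>*"
| "rel M (Test \<phi>) = {(w,w) | w. sat M w \<phi>}"

type_synonym ('p,'a) seq = "('p,'a) fm set \<times> ('p,'a) fm set"

definition valid_seq :: "('a,'p,'w) model \<Rightarrow> ('p,'a) seq \<Rightarrow> bool" where
  "valid_seq M S = (\<forall>w. (\<forall>\<phi>\<in>fst S. sat M w \<phi>) \<longrightarrow> (\<exists>\<psi>\<in>snd S. sat M w \<psi>))"

text \<open>Rule labels, recording the data of the principal formula where traces need it.\<close>
datatype ('p,'a) rule =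
    RAx | RBot | RImpL | RImpR "('p,'a) fm" "('p,'a) fm" | RWk | RCut
  | RBox "('p,'a) pg" "('p,'a) fm" | RBoxC "('p,'a) pg" "('p,'a) fm"
  | RSeqL | RSeqR "('p,'a) pg" "('p,'a) pg" "('p,'a) fm"
  | RChL | RChR "('p,'a) pg" "('p,'a) pg" "('p,'a) fm"
  | RStarL | RTestL | RTestR "('p,'a) fm" "('p,'a) fm"
  | RCs "('p,'a) pg" "('p,'a) fm"

fun rule_inst :: "('p,'a) rule \<Rightarrow> ('p,'a) seq list \<Rightarrow> ('p,'a) seq \<Rightarrow> bool" where
  "rule_inst RAx ps c = (ps = [] \<and> fst c \<inter> snd c \<noteq> {})"
| "rule_inst RBot ps c = (ps = [] \<and> (\<exists>\<Gamma>. fst c = insert Bot \<Gamma>))"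
| "rule_inst RImpL ps c = (\<exists>\<Gamma> \<Delta> \<phi> \<psi>. c = (insert (Imp \<phi> \<psi>) \<Gamma>, \<Delta>) \<and>
      ps = [(\<Gamma>, insert \<phi> \<Delta>), (insert \<psi> \<Gamma>, \<Delta>)])"
| "rule_inst (RImpR \<phi> \<psi>) ps c = (\<exists>\<Gamma> \<Delta>. c = (\<Gamma>, insert (Imp \<phi> \<psi>) \<Delta>) \<and>
      ps = [(insert \<phi> \<Gamma>, insert \<psi> \<Delta>)])"
| "rule_inst RWk ps c = (\<exists>\<Gamma> \<Delta>. ps = [(\<Gamma>, \<Delta>)] \<and> \<Gamma> \<subseteq> fst c \<and> \<Delta> \<subseteq> snd c)"
| "rule_inst RCut ps c = (\<exists>\<phi>. ps = [(fst c, insert \<phi> (snd c)), (insert \<phi> (fst c), snd c)])"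
| "rule_inst (RBox \<pi> \<phi>) ps c = (\<exists>\<Gamma> \<Delta>. c = (Box \<pi> ` \<Gamma>, insert (Box \<pi> \<phi>) \<Delta>) \<and>
      ps = [(\<Gamma>, insert \<phi> (BoxC \<pi> ` \<Delta>))])"
| "rule_inst (RBoxC \<pi> \<phi>) ps c = (\<exists>\<Gamma> \<Delta>. c = (BoxC \<pi> ` \<Gamma>, insert (BoxC \<pi> \<phi>) \<Delta>) \<and>
      ps = [(\<Gamma>, insert \<phi> (Box \<pi> ` \<Delta>))])"
| "rule_inst RSeqL ps c = (\<exists>\<Gamma> \<Delta> \<pi>0 \<pi>1 \<phi>. c = (insert (Box (Seq \<pi>0 \<pi>1) \<phi>) \<Gamma>, \<Delta>) \<and>
      ps = [(insert (Box \<pi>0 (Box \<pi>1 \<phi>)) \<Gamma>, \<Delta>)])"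
| "rule_inst (RSeqR \<pi>0 \<pi>1 \<phi>) ps c = (\<exists>\<Gamma> \<Delta>. c = (\<Gamma>, insert (Box (Seq \<pi>0 \<pi>1) \<phi>) \<Delta>) \<and>
      ps = [(\<Gamma>, insert (Box \<pi>0 (Box \<pi>1 \<phi>)) \<Delta>)])"
| "rule_inst RChL ps c = (\<exists>\<Gamma> \<Delta> \<pi>0 \<pi>1 \<phi>. c = (insert (Box (Ch \<pi>0 \<pi>1) \<phi>) \<Gamma>, \<Delta>) \<and>
      ps = [(insert (Box \<pi>0 \<phi>) (insert (Box \<pi>1 \<phi>) \<Gamma>), \<Delta>)])"
| "rule_inst (RChR \<pi>0 \<pi>1 \<phi>) ps c = (\<exists>\<Gamma> \<Delta>. c = (\<Gamma>, insert (Box (Ch \<pi>0 \<pi>1) \<phi>) \<Delta>) \<and>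
      ps = [(\<Gamma>, insert (Box \<pi>0 \<phi>) \<Delta>), (\<Gamma>, insert (Box \<pi>1 \<phi>) \<Delta>)])"
| "rule_inst RStarL ps c = (\<exists>\<Gamma> \<Delta> \<pi> \<phi>. c = (insert (Box (Star \<pi>) \<phi>) \<Gamma>, \<Delta>) \<and>
      ps = [(insert \<phi> (insert (Box \<pi> (Box (Star \<pi>) \<phi>)) \<Gamma>), \<Delta>)])"
| "rule_inst RTestL ps c = (\<exists>\<Gamma> \<Delta> \<phi> \<psi>. c = (insert (Box (Test \<phi>) \<psi>) \<Gamma>, \<Delta>) \<and>
      ps = [(\<Gamma>, insert \<phi> \<Delta>), (insert \<psi> \<Gamma>, \<Delta>)])"
| "rule_inst (RTestR \<phi> \<psi>) ps c = (\<exists>\<Gamma> \<Delta>. c = (\<Gamma>, insert (Box (Test \<phi>) \<psi>) \<Delta>) \<and>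
      ps = [(insert \<phi> \<Gamma>, insert \<psi> \<Delta>)])"
| "rule_inst (RCs \<pi> \<phi>) ps c = (\<exists>\<Gamma> \<Delta>. c = (\<Gamma>, insert (Box (Star \<pi>) \<phi>) \<Delta>) \<and>
      ps = [(\<Gamma>, insert \<phi> \<Delta>), (\<Gamma>, insert (Box \<pi> (Box (Star \<pi>) \<phi>)) \<Delta>)])"

text \<open>Trace condition: going from the conclusion of rule r to its j-th premise (0-based),
  trace formula tau in the conclusion may be followed by tau'.\<close>
fun trace_step :: "('p,'a) rule \<Rightarrow> nat \<Rightarrow> ('p,'a) fm \<Rightarrow> ('p,'a) fm \<Rightarrow> bool" where
  "trace_step (RImpR \<phi> \<psi>) j \<tau> \<tau>' = ((\<tau> = Imp \<phi> \<psi> \<and> \<tau>' = \<psi>) \<or> \<tau>' = \<tau>)"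
| "trace_step (RBox \<pi> \<phi>) j \<tau> \<tau>' = (\<tau> = Box \<pi> \<phi> \<and> \<tau>' = \<phi>)"
| "trace_step (RBoxC \<pi> \<phi>) j \<tau> \<tau>' = (\<tau> = BoxC \<pi> \<phi> \<and> \<tau>' = \<phi>)"
| "trace_step (RSeqR \<pi>0 \<pi>1 \<phi>) j \<tau> \<tau>' =
     ((\<tau> = Box (Seq \<pi>0 \<pi>1) \<phi> \<and> \<tau>' = Box \<pi>0 (Box \<pi>1 \<phi>)) \<or> \<tau>' = \<tau>)"
| "trace_step (RChR \<pi>0 \<pi>1 \<phi>) j \<tau> \<tau>' =
     ((\<tau> = Box (Ch \<pi>0 \<pi>1) \<phi> \<and> \<tau>' = Box (if j = 0 then \<pi>0 else \<pi>1) \<phi>) \<or> \<tau>' = \<tau>)"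
| "trace_step (RTestR \<phi> \<psi>) j \<tau> \<tau>' = ((\<tau> = Box (Test \<phi>) \<psi> \<and> \<tau>' = \<psi>) \<or> \<tau>' = \<tau>)"
| "trace_step (RCs \<pi> \<phi>) j \<tau> \<tau>' =
     ((\<tau> = Box (Star \<pi>) \<phi> \<and> \<tau>' = (if j = 0 then \<phi> else Box \<pi> (Box (Star \<pi>) \<phi>))) \<or> \<tau>' = \<tau>)"
| "trace_step _ j \<tau> \<tau>' = (\<tau>' = \<tau>)"

fun progress :: "('p,'a) rule \<Rightarrow> nat \<Rightarrow> ('p,'a) fm \<Rightarrow> ('p,'a) fm \<Rightarrow> bool" where
  "progress (RCs \<pi> \<phi>) j \<tau> \<tau>' =
     (j = 1 \<and> \<tau> = Box (Star \<pi>) \<phi> \<and> \<tau>' = Box \<pi> (Box (Star \<pi>) \<phi>))"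
| "progress _ j \<tau> \<tau>' = False"

text \<open>Finite derivation trees: inner nodes / axiom leaves carry a rule label and the list
  of premise subtrees; buds are leaves without rule. Nodes are addressed by positions
  (nat lists); the companion function C maps bud positions to positions.\<close>
datatype ('p,'a) ptree = PNode "('p,'a) seq" "('p,'a) rule" "('p,'a) ptree list"
  | Bud "('p,'a) seq"

fun seq_of :: "('p,'a) ptree \<Rightarrow> ('p,'a) seq" where
  "seq_of (PNode s r ts) = s"
| "seq_of (Bud s) = s"

fun rule_of :: "('p,'a) ptree \<Rightarrow> ('p,'a) rule" where
  "rule_of (PNode s r ts) = r"
| "rule_of (Bud s) = RAx"  (* never used: path nodes are PNodes *)

definition subtree :: "('p,'a) ptree \<Rightarrow> nat list \<Rightarrow> ('p,'a) ptree option" where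
  "subtree t p = fold (\<lambda>i ot. case ot of
       Some (PNode s r ts) \<Rightarrow> (if i < length ts then Some (ts ! i) else None)
     | _ \<Rightarrow> None) p (Some t)"

definition is_preproof :: "('p,'a) ptree \<Rightarrow> (nat list \<Rightarrow> nat list) \<Rightarrow> bool" where
  "is_preproof t C =
    ((\<forall>p s r ts. subtree t p = Some (PNode s r ts) \<longrightarrow>
        rule_inst r (map seq_of ts) s \<and> finite (fst s) \<and> finite (snd s)) \<and>
     (\<forall>p s. subtree t p = Some (Bud s) \<longrightarrow>
        (\<exists>r ts. ts \<noteq> [] \<and> subtree t (C p) = Some (PNode s r ts))))"

text \<open>Successor in the derivation graph (buds identified with their companions).\<close>
definition next_node :: "('p,'a) ptree \<Rightarrow> (nat list \<Rightarrow> nat list) \<Rightarrow> nat list \<Rightarrow> nat \<Rightarrow> nat list" where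
  "next_node t C p j = (case subtree t (p @ [j]) of Some (Bud s) \<Rightarrow> C (p @ [j]) | _ \<Rightarrow> p @ [j])"

text \<open>Infinite path: sequence of graph nodes ps with the premise index js i taken at step i.\<close>
definition is_path :: "('p,'a) ptree \<Rightarrow> (nat list \<Rightarrow> nat list) \<Rightarrow> (nat \<Rightarrow> nat list) \<Rightarrow> (nat \<Rightarrow> nat) \<Rightarrow> bool" where
  "is_path t C ps js = (\<forall>i. \<exists>s r ts. subtree t (ps i) = Some (PNode s r ts) \<and>
      js i < length ts \<and> ps (Suc i) = next_node t C (ps i) (js i))"

definition node_seq :: "('p,'a) ptree \<Rightarrow> nat list \<Rightarrow> ('p,'a) seq" where
  "node_seq t p = seq_of (the (subtree t p))"

definition node_rule :: "('p,'a) ptree \<Rightarrow> nat list \<Rightarrow> ('p,'a) rule" where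
  "node_rule t p = rule_of (the (subtree t p))"

definition is_trace :: "('p,'a) ptree \<Rightarrow> (nat \<Rightarrow> nat list) \<Rightarrow> (nat \<Rightarrow> nat) \<Rightarrow> nat \<Rightarrow> (nat \<Rightarrow> ('p,'a) fm) \<Rightarrow> bool" where
  "is_trace t ps js k \<tau> = (\<forall>i\<ge>k. \<tau> i \<in> snd (node_seq t (ps i)) \<and>
      trace_step (node_rule t (ps i)) (js i) (\<tau> i) (\<tau> (Suc i)))"

definition inf_progressing :: "('p,'a) ptree \<Rightarrow> (nat \<Rightarrow> nat list) \<Rightarrow> (nat \<Rightarrow> nat) \<Rightarrow> (nat \<Rightarrow> ('p,'a) fm) \<Rightarrow> bool" where
  "inf_progressing t ps js \<tau> =
     (\<exists>\<^sub>\<infinity>i. progress (node_rule t (ps i)) (js i) (\<tau> i) (\<tau> (Suc i)))"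

definition global_trace_condition :: "('p,'a) ptree \<Rightarrow> (nat list \<Rightarrow> nat list) \<Rightarrow> bool" where
  "global_trace_condition t C = (\<forall>ps js. is_path t C ps js \<longrightarrow>
      (\<exists>k \<tau>. is_trace t ps js k \<tau> \<and> inf_progressing t ps js \<tau>))"

definition is_proof :: "('p,'a) ptree \<Rightarrow> (nat list \<Rightarrow> nat list) \<Rightarrow> ('p,'a) seq \<Rightarrow> bool" where
  "is_proof t C S = (is_preproof t C \<and> seq_of t = S \<and> global_trace_condition t C)"

definition provable :: "('p,'a) seq \<Rightarrow> bool" where
  "provable S = (\<exists>t C. is_proof t C S)"

end

theory Submission
  imports Defs
begin

text \<open>Suppose the root sequent is falsified at some state of a model. Measure a false formula
  at a state by its rank: the least number of star iterations in a witness of its falsity.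
  Every rule with a falsified conclusion has a premise falsified at some state such that
  along every trace step into it the rank never increases, and it strictly decreases at the
  progress points of (C-s), where one iteration of the star is consumed. Following such
  premises forever yields an infinite path, and an infinitely progressing trace along it
  would be an infinitely descending sequence of natural numbers.\<close>

inductive walk :: "('a,'p,'w) model \<Rightarrow> ('p,'a) pg \<Rightarrow> 'w \<Rightarrow> 'w \<Rightarrow> nat \<Rightarrow> bool" for M where
  walk_At: "(w,v) \<in> fst M a \<Longrightarrow> walk M (At a) w v 0"
| walk_Seq: "walk M \<pi>0 w u m \<Longrightarrow> walk M \<pi>1 u v n \<Longrightarrow> walk M (Seq \<pi>0 \<pi>1) w v (m + n)"
| walk_Ch0: "walk M \<pi>0 w v n \<Longrightarrow> walk M (Ch \<pi>0 \<pi>1) w v n"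
| walk_Ch1: "walk M \<pi>1 w v n \<Longrightarrow> walk M (Ch \<pi>0 \<pi>1) w v n"
| walk_Star_refl: "walk M (Star \<pi>) w w 0"
| walk_Star_step: "walk M \<pi> w u m \<Longrightarrow> walk M (Star \<pi>) u v n \<Longrightarrow> walk M (Star \<pi>) w v (m + n + 1)"
| walk_Test: "sat M w \<phi> \<Longrightarrow> walk M (Test \<phi>) w w 0"

inductive_cases walk_SeqE: "walk M (Seq \<pi>0 \<pi>1) w v n"
inductive_cases walk_ChE: "walk M (Ch \<pi>0 \<pi>1) w v n"
inductive_cases walk_StarE: "walk M (Star \<pi>) w v n"
inductive_cases walk_TestE: "walk M (Test \<phi>) w v n"

lemma walk_imp_rel: "walk M \<pi> w v n \<Longrightarrow> (w,v) \<in> rel M \<pi>"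
  by (induction rule: walk.induct) (auto intro: converse_rtrancl_into_rtrancl)

lemma ex_walk_iff_rel: "(\<exists>n. walk M \<pi> w v n) \<longleftrightarrow> (w,v) \<in> rel M \<pi>"
proof
  show "(w,v) \<in> rel M \<pi> \<Longrightarrow> \<exists>n. walk M \<pi> w v n"
  proof (induction \<pi> arbitrary: w v rule: pg.induct[of "\<lambda>_. True"])
    case (Star \<pi>)
    from \<open>(w,v) \<in> rel M (Star \<pi>)\<close> have "(w,v) \<in> (rel M \<pi>)\<^sup>*" by simp
    then show ?case
      by (induction rule: converse_rtrancl_induct) (use Star.IH in \<open>blast intro: walk.intros\<close>)+
  qed (simp; blast intro: walk.intros)+
qed (blast intro: walk_imp_rel)

fun refutation :: "('a,'p,'w) model \<Rightarrow> ('p,'a) fm \<Rightarrow> 'w \<Rightarrow> nat \<Rightarrow> bool" where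
  "refutation M Bot w n = (n = 0)"
| "refutation M (Atom p) w n = (p \<notin> snd M w \<and> n = 0)"
| "refutation M (Imp \<phi> \<psi>) w n = (sat M w \<phi> \<and> refutation M \<psi> w n)"
| "refutation M (Box \<pi> \<psi>) w n = (\<exists>v m k. walk M \<pi> w v m \<and> refutation M \<psi> v k \<and> n = m + k)"
| "refutation M (BoxC \<pi> \<psi>) w n = (\<exists>v. (v,w) \<in> rel M \<pi> \<and> refutation M \<psi> v n)"
  \<comment> \<open>converse steps cost nothing: no trace progresses through a converse box\<close>

lemma ex_refutation_iff_not_sat: "(\<exists>n. refutation M \<phi> w n) \<longleftrightarrow> \<not> sat M w \<phi>"
proof (induction \<phi> arbitrary: w rule: fm.induct[of _ "\<lambda>_. True"])
  case (Imp \<phi> \<psi>)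
  have "(\<exists>n. refutation M (Imp \<phi> \<psi>) w n) \<longleftrightarrow> sat M w \<phi> \<and> (\<exists>n. refutation M \<psi> w n)"
    by simp
  then show ?case by (simp only: Imp.IH) simp
next
  case (Box \<pi> \<psi>)
  have "(\<exists>n. refutation M (Box \<pi> \<psi>) w n) \<longleftrightarrow> (\<exists>v. (\<exists>m. walk M \<pi> w v m) \<and> (\<exists>k. refutation M \<psi> v k))"
    by auto
  also have "\<dots> \<longleftrightarrow> (\<exists>v. (w, v) \<in> rel M \<pi> \<and> \<not> sat M v \<psi>)"
    by (simp only: ex_walk_iff_rel Box.IH)
  finally show ?case by simp
next
  case (BoxC \<pi> \<psi>)
  have "(\<exists>n. refutation M (BoxC \<pi> \<psi>) w n) \<longleftrightarrow> (\<exists>v. (v, w) \<in> rel M \<pi> \<and> (\<exists>n. refutation M \<psi> v n))"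
    by auto
  then show ?case by (simp only: BoxC.IH) simp
qed auto

lemma refutation_imp_not_sat: "refutation M \<phi> w n \<Longrightarrow> \<not> sat M w \<phi>"
  using ex_refutation_iff_not_sat[of M \<phi> w] by blast

definition rank :: "('a,'p,'w) model \<Rightarrow> ('p,'a) fm \<Rightarrow> 'w \<Rightarrow> nat" where
  "rank M \<phi> w = (LEAST n. refutation M \<phi> w n)"

lemma refutation_rank:
  assumes "\<not> sat M w \<phi>"
  shows "refutation M \<phi> w (rank M \<phi> w)"
proof -
  from assms obtain n where "refutation M \<phi> w n"
    using ex_refutation_iff_not_sat[of M \<phi> w] by blast
  then show ?thesis unfolding rank_def by (rule LeastI)
qed

lemma rank_le: "refutation M \<phi> w n \<Longrightarrow> rank M \<phi> w \<le> n"
  unfolding rank_def by (rule Least_le)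

lemma refutation_BoxI:
  "walk M \<pi> w v m \<Longrightarrow> refutation M \<psi> v k \<Longrightarrow> refutation M (Box \<pi> \<psi>) w (m + k)"
  by auto

lemma refutation_Seq:
  assumes "refutation M (Box (Seq \<pi>0 \<pi>1) \<phi>) w n"
  shows "refutation M (Box \<pi>0 (Box \<pi>1 \<phi>)) w n"
proof -
  from assms obtain u v m0 m1 k where "walk M \<pi>0 w u m0" "walk M \<pi>1 u v m1"
    "refutation M \<phi> v k" "n = m0 + (m1 + k)"
    by (auto elim!: walk_SeqE)
  then show ?thesis by (blast intro: refutation_BoxI)
qed

lemma refutation_Ch:
  assumes "refutation M (Box (Ch \<pi>0 \<pi>1) \<phi>) w n"
  shows "refutation M (Box \<pi>0 \<phi>) w n \<or> refutation M (Box \<pi>1 \<phi>) w n"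
proof -
  from assms obtain v m k where "walk M (Ch \<pi>0 \<pi>1) w v m" "refutation M \<phi> v k" "n = m + k"
    by auto
  then show ?thesis by (blast elim: walk_ChE intro: refutation_BoxI)
qed

lemma refutation_Star:
  assumes "refutation M (Box (Star \<pi>) \<phi>) w n"
  shows "refutation M \<phi> w n \<or> (\<exists>m<n. refutation M (Box \<pi> (Box (Star \<pi>) \<phi>)) w m)"
proof -
  from assms obtain v m k where walk: "walk M (Star \<pi>) w v m" and "refutation M \<phi> v k" "n = m + k"
    by auto
  from walk consider "v = w" "m = 0"
    | u m0 m1 where "walk M \<pi> w u m0" "walk M (Star \<pi>) u v m1" "m = m0 + m1 + 1"
    by (auto elim: walk_StarE)
  then show ?thesis
  proof cases
    case 1
    with \<open>refutation M \<phi> v k\<close> \<open>n = m + k\<close> have "refutation M \<phi> w n" by simp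
    then show ?thesis ..
  next
    case (2 u m0 m1)
    with \<open>refutation M \<phi> v k\<close>
    have "refutation M (Box \<pi> (Box (Star \<pi>) \<phi>)) w (m0 + (m1 + k))"
      by (blast intro: refutation_BoxI)
    moreover from 2 \<open>n = m + k\<close> have "m0 + (m1 + k) < n" by simp
    ultimately show ?thesis by blast
  qed
qed

lemma refutation_Test: "refutation M (Box (Test \<phi>) \<psi>) w n \<Longrightarrow> refutation M \<psi> w n"
  by (auto elim!: walk_TestE)

lemma rank_mono:
  assumes "\<not> sat M w \<phi>" and "\<And>n. refutation M \<phi> w n \<Longrightarrow> refutation M \<psi> v n"
  shows "rank M \<psi> v \<le> rank M \<phi> w"
  using assms by (blast intro: rank_le refutation_rank)

definition falsified :: "('a,'p,'w) model \<Rightarrow> ('p,'a) seq \<Rightarrow> 'w \<Rightarrow> bool" where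
  "falsified M S w \<longleftrightarrow> (\<forall>\<phi>\<in>fst S. sat M w \<phi>) \<and> (\<forall>\<psi>\<in>snd S. \<not> sat M w \<psi>)"

definition descending_step ::
    "('a,'p,'w) model \<Rightarrow> ('p,'a) rule \<Rightarrow> nat \<Rightarrow> ('p,'a) fm set \<Rightarrow> 'w \<Rightarrow> 'w \<Rightarrow> bool" where
  "descending_step M r j \<Delta> w w' \<longleftrightarrow> (\<forall>\<tau>\<in>\<Delta>. \<forall>\<tau>'. trace_step r j \<tau> \<tau>' \<longrightarrow>
     rank M \<tau>' w' \<le> rank M \<tau> w \<and> (progress r j \<tau> \<tau>' \<longrightarrow> rank M \<tau>' w' < rank M \<tau> w))"

lemma passive_rule_falsified_premise:
  assumes "rule_inst r ps s" "falsified M s w"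
    and "r \<in> {RAx, RBot, RImpL, RWk, RCut, RSeqL, RChL, RStarL, RTestL}"
  shows "\<exists>j<length ps. falsified M (ps ! j) w \<and> descending_step M r j (snd s) w w"
  using assms
  by (cases r; auto simp: falsified_def descending_step_def Ex_less_Suc2;
      blast intro: relcompI converse_rtrancl_into_rtrancl)

lemma RImpR_falsified_premise:
  assumes fs: "falsified M (\<Gamma>, insert (Imp \<phi> \<psi>) \<Delta>) w"
  shows "falsified M (insert \<phi> \<Gamma>, insert \<psi> \<Delta>) w \<and>
    descending_step M (RImpR \<phi> \<psi>) 0 (insert (Imp \<phi> \<psi>) \<Delta>) w w"
proof -
  from fs have "\<not> sat M w (Imp \<phi> \<psi>)" by (simp add: falsified_def)
  then have "rank M \<psi> w \<le> rank M (Imp \<phi> \<psi>) w" by (rule rank_mono) simp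
  with fs show ?thesis by (auto simp: falsified_def descending_step_def)
qed

lemma RTestR_falsified_premise:
  assumes fs: "falsified M (\<Gamma>, insert (Box (Test \<phi>) \<psi>) \<Delta>) w"
  shows "falsified M (insert \<phi> \<Gamma>, insert \<psi> \<Delta>) w \<and>
    descending_step M (RTestR \<phi> \<psi>) 0 (insert (Box (Test \<phi>) \<psi>) \<Delta>) w w"
proof -
  from fs have "\<not> sat M w (Box (Test \<phi>) \<psi>)" by (simp add: falsified_def)
  then have "rank M \<psi> w \<le> rank M (Box (Test \<phi>) \<psi>) w" by (rule rank_mono[OF _ refutation_Test])
  with fs show ?thesis by (auto simp: falsified_def descending_step_def)
qed

lemma RSeqR_falsified_premise:
  assumes fs: "falsified M (\<Gamma>, insert (Box (Seq \<pi>0 \<pi>1) \<phi>) \<Delta>) w"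
  shows "falsified M (\<Gamma>, insert (Box \<pi>0 (Box \<pi>1 \<phi>)) \<Delta>) w \<and>
    descending_step M (RSeqR \<pi>0 \<pi>1 \<phi>) 0 (insert (Box (Seq \<pi>0 \<pi>1) \<phi>) \<Delta>) w w"
proof -
  from fs have "\<not> sat M w (Box (Seq \<pi>0 \<pi>1) \<phi>)" by (simp add: falsified_def)
  then have "rank M (Box \<pi>0 (Box \<pi>1 \<phi>)) w \<le> rank M (Box (Seq \<pi>0 \<pi>1) \<phi>) w"
    by (rule rank_mono[OF _ refutation_Seq])
  with fs show ?thesis by (auto simp: falsified_def descending_step_def)
qed

lemma RChR_falsified_premise:
  assumes fs: "falsified M (\<Gamma>, insert (Box (Ch \<pi>0 \<pi>1) \<phi>) \<Delta>) w"
  shows "falsified M (\<Gamma>, insert (Box \<pi>0 \<phi>) \<Delta>) w \<and>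
      descending_step M (RChR \<pi>0 \<pi>1 \<phi>) 0 (insert (Box (Ch \<pi>0 \<pi>1) \<phi>) \<Delta>) w w
    \<or> falsified M (\<Gamma>, insert (Box \<pi>1 \<phi>) \<Delta>) w \<and>
      descending_step M (RChR \<pi>0 \<pi>1 \<phi>) 1 (insert (Box (Ch \<pi>0 \<pi>1) \<phi>) \<Delta>) w w"
proof -
  define n where "n = rank M (Box (Ch \<pi>0 \<pi>1) \<phi>) w"
  from fs have "refutation M (Box (Ch \<pi>0 \<pi>1) \<phi>) w n"
    unfolding n_def by (intro refutation_rank) (auto simp: falsified_def)
  then have "refutation M (Box \<pi>0 \<phi>) w n \<or> refutation M (Box \<pi>1 \<phi>) w n"
    by (rule refutation_Ch)
  then show ?thesis
  proof
    assume "refutation M (Box \<pi>0 \<phi>) w n"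
    then have "\<not> sat M w (Box \<pi>0 \<phi>)" "rank M (Box \<pi>0 \<phi>) w \<le> n"
      by (rule refutation_imp_not_sat, rule rank_le)
    with fs show ?thesis by (auto simp: falsified_def descending_step_def n_def)
  next
    assume "refutation M (Box \<pi>1 \<phi>) w n"
    then have "\<not> sat M w (Box \<pi>1 \<phi>)" "rank M (Box \<pi>1 \<phi>) w \<le> n"
      by (rule refutation_imp_not_sat, rule rank_le)
    with fs show ?thesis by (auto simp: falsified_def descending_step_def n_def)
  qed
qed

lemma RCs_falsified_premise:
  assumes fs: "falsified M (\<Gamma>, insert (Box (Star \<pi>) \<phi>) \<Delta>) w"
  shows "falsified M (\<Gamma>, insert \<phi> \<Delta>) w \<and>
      descending_step M (RCs \<pi> \<phi>) 0 (insert (Box (Star \<pi>) \<phi>) \<Delta>) w w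
    \<or> falsified M (\<Gamma>, insert (Box \<pi> (Box (Star \<pi>) \<phi>)) \<Delta>) w \<and>
      descending_step M (RCs \<pi> \<phi>) 1 (insert (Box (Star \<pi>) \<phi>) \<Delta>) w w"
proof -
  define n where "n = rank M (Box (Star \<pi>) \<phi>) w"
  from fs have "refutation M (Box (Star \<pi>) \<phi>) w n"
    unfolding n_def by (intro refutation_rank) (auto simp: falsified_def)
  then have "refutation M \<phi> w n \<or> (\<exists>m<n. refutation M (Box \<pi> (Box (Star \<pi>) \<phi>)) w m)"
    by (rule refutation_Star)
  then show ?thesis
  proof
    assume "refutation M \<phi> w n"
    then have "\<not> sat M w \<phi>" "rank M \<phi> w \<le> n"
      by (rule refutation_imp_not_sat, rule rank_le)
    with fs show ?thesis by (auto simp: falsified_def descending_step_def n_def)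
  next
    assume "\<exists>m<n. refutation M (Box \<pi> (Box (Star \<pi>) \<phi>)) w m"
    then obtain m where "m < n" and "refutation M (Box \<pi> (Box (Star \<pi>) \<phi>)) w m"
      by blast
    then have "\<not> sat M w (Box \<pi> (Box (Star \<pi>) \<phi>))" "rank M (Box \<pi> (Box (Star \<pi>) \<phi>)) w < n"
      by (blast dest: refutation_imp_not_sat, blast dest: rank_le intro: le_less_trans)
    with fs show ?thesis by (auto simp: falsified_def descending_step_def n_def)
  qed
qed

lemma RBox_falsified_premise:
  assumes fs: "falsified M (Box \<pi> ` \<Gamma>, insert (Box \<pi> \<phi>) \<Delta>) w"
  shows "\<exists>v. falsified M (\<Gamma>, insert \<phi> (BoxC \<pi> ` \<Delta>)) v \<and>
    descending_step M (RBox \<pi> \<phi>) 0 (insert (Box \<pi> \<phi>) \<Delta>) w v"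
proof -
  from fs have "refutation M (Box \<pi> \<phi>) w (rank M (Box \<pi> \<phi>) w)"
    by (intro refutation_rank) (auto simp: falsified_def)
  then obtain v m k where v: "walk M \<pi> w v m" "refutation M \<phi> v k" "rank M (Box \<pi> \<phi>) w = m + k"
    by auto
  from v(2) have "rank M \<phi> v \<le> k" by (rule rank_le)
  with v fs have "falsified M (\<Gamma>, insert \<phi> (BoxC \<pi> ` \<Delta>)) v \<and>
      descending_step M (RBox \<pi> \<phi>) 0 (insert (Box \<pi> \<phi>) \<Delta>) w v"
    by (auto simp: falsified_def descending_step_def dest: walk_imp_rel refutation_imp_not_sat)
  then show ?thesis ..
qed

lemma RBoxC_falsified_premise:
  assumes fs: "falsified M (BoxC \<pi> ` \<Gamma>, insert (BoxC \<pi> \<phi>) \<Delta>) w"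
  shows "\<exists>v. falsified M (\<Gamma>, insert \<phi> (Box \<pi> ` \<Delta>)) v \<and>
    descending_step M (RBoxC \<pi> \<phi>) 0 (insert (BoxC \<pi> \<phi>) \<Delta>) w v"
proof -
  from fs have "refutation M (BoxC \<pi> \<phi>) w (rank M (BoxC \<pi> \<phi>) w)"
    by (intro refutation_rank) (auto simp: falsified_def)
  then obtain v where v: "(v, w) \<in> rel M \<pi>" "refutation M \<phi> v (rank M (BoxC \<pi> \<phi>) w)"
    by auto
  from v(2) have "rank M \<phi> v \<le> rank M (BoxC \<pi> \<phi>) w" by (rule rank_le)
  with v fs have "falsified M (\<Gamma>, insert \<phi> (Box \<pi> ` \<Delta>)) v \<and>
      descending_step M (RBoxC \<pi> \<phi>) 0 (insert (BoxC \<pi> \<phi>) \<Delta>) w v"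
    by (auto simp: falsified_def descending_step_def dest: refutation_imp_not_sat)
  then show ?thesis ..
qed

lemma rule_falsified_premise:
  assumes ri: "rule_inst r ps s" and fs: "falsified M s w"
  shows "\<exists>j<length ps. \<exists>w'. falsified M (ps ! j) w' \<and> descending_step M r j (snd s) w w'"
proof (cases r)
  case (RImpR \<phi> \<psi>)
  with ri fs show ?thesis by (fastforce simp: Ex_less_Suc2 dest: RImpR_falsified_premise)
next
  case (RTestR \<phi> \<psi>)
  with ri fs show ?thesis by (fastforce simp: Ex_less_Suc2 dest: RTestR_falsified_premise)
next
  case (RSeqR \<pi>0 \<pi>1 \<phi>)
  with ri fs show ?thesis by (fastforce simp: Ex_less_Suc2 dest: RSeqR_falsified_premise)
next
  case (RChR \<pi>0 \<pi>1 \<phi>)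
  with ri fs show ?thesis by (fastforce simp: Ex_less_Suc2 dest: RChR_falsified_premise)
next
  case (RCs \<pi> \<phi>)
  with ri fs show ?thesis by (fastforce simp: Ex_less_Suc2 dest: RCs_falsified_premise)
next
  case (RBox \<pi> \<phi>)
  with ri fs show ?thesis by (fastforce simp: Ex_less_Suc2 dest: RBox_falsified_premise)
next
  case (RBoxC \<pi> \<phi>)
  with ri fs show ?thesis by (fastforce simp: Ex_less_Suc2 dest: RBoxC_falsified_premise)
qed (use passive_rule_falsified_premise[OF ri fs] in blast)+

lemma subtree_Nil [simp]: "subtree t [] = Some t"
  by (simp add: subtree_def)

lemma subtree_snoc: "subtree t (p @ [j]) = (case subtree t p of
    Some (PNode s r ts) \<Rightarrow> if j < length ts then Some (ts ! j) else None | _ \<Rightarrow> None)"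
  by (simp add: subtree_def)

lemma subtree_Bud: "subtree (Bud s) p \<noteq> Some (PNode s' r ts)"
  by (induction p arbitrary: s' r ts rule: rev_induct)
    (simp_all add: subtree_snoc split: option.splits ptree.splits)

lemma is_preproof_rule_inst:
  "is_preproof t C \<Longrightarrow> subtree t p = Some (PNode s r ts) \<Longrightarrow> rule_inst r (map seq_of ts) s"
  unfolding is_preproof_def by blast

lemma is_preproof_companion:
  "is_preproof t C \<Longrightarrow> subtree t p = Some (Bud s) \<Longrightarrow> \<exists>r ts. subtree t (C p) = Some (PNode s r ts)"
  unfolding is_preproof_def by blast

definition falsified_node :: "('a,'p,'w) model \<Rightarrow> ('p,'a) ptree \<Rightarrow> nat list \<Rightarrow> 'w \<Rightarrow> bool" where
  "falsified_node M t p w \<longleftrightarrow> (\<exists>s r ts. subtree t p = Some (PNode s r ts) \<and> falsified M s w)"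

lemma falsified_node_root:
  assumes "is_preproof t C" and "falsified M (seq_of t) w"
  shows "falsified_node M t [] w"
proof (cases t)
  case (PNode s r ts)
  with assms(2) show ?thesis by (simp add: falsified_node_def)
next
  case (Bud s)
  with assms(1) obtain r ts where "subtree (Bud s) (C []) = Some (PNode s r ts)"
    using is_preproof_companion[of t C "[]" s] by auto
  with subtree_Bud show ?thesis by blast
qed

lemma falsified_node_successor:
  assumes pp: "is_preproof t C" and "falsified_node M t p w"
  shows "\<exists>j w'. (\<exists>s r ts. subtree t p = Some (PNode s r ts) \<and> j < length ts) \<and>
    falsified_node M t (next_node t C p j) w' \<and>
    descending_step M (node_rule t p) j (snd (node_seq t p)) w w'"
proof -
  from assms(2) obtain s r ts where st: "subtree t p = Some (PNode s r ts)" and fs: "falsified M s w"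
    by (auto simp: falsified_node_def)
  from pp st have "rule_inst r (map seq_of ts) s" by (rule is_preproof_rule_inst)
  from rule_falsified_premise[OF this fs] obtain j w' where j: "j < length ts"
    and fj: "falsified M (seq_of (ts ! j)) w'" and desc: "descending_step M r j (snd s) w w'"
    by auto
  from st j have sj: "subtree t (p @ [j]) = Some (ts ! j)" by (simp add: subtree_snoc)
  have "falsified_node M t (next_node t C p j) w'"
  proof (cases "ts ! j")
    case (PNode s' r' ts')
    with sj fj show ?thesis by (simp add: falsified_node_def next_node_def)
  next
    case (Bud s')
    with pp sj obtain r' ts' where "subtree t (C (p @ [j])) = Some (PNode s' r' ts')"
      using is_preproof_companion by fastforce
    with sj fj Bud show ?thesis by (simp add: falsified_node_def next_node_def)
  qed
  with st j desc show ?thesis by (auto simp: node_rule_def node_seq_def)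
qed

lemma falsified_node_infinite_path:
  fixes M :: "('a,'p,'w) model"
  assumes pp: "is_preproof t C" and "falsified_node M t p w"
  shows "\<exists>ps js ws. is_path t C ps js \<and>
    (\<forall>i. descending_step M (node_rule t (ps i)) (js i) (snd (node_seq t (ps i))) (ws i) (ws (Suc i)))"
proof -
  define step where "step x j y \<longleftrightarrow>
      (\<exists>s r ts. subtree t (fst x) = Some (PNode s r ts) \<and> j < length ts) \<and>
      fst y = next_node t C (fst x) j \<and>
      descending_step M (node_rule t (fst x)) j (snd (node_seq t (fst x))) (snd x) (snd y)"
    for x y :: "nat list \<times> 'w" and j
  have "\<exists>f. \<forall>i. falsified_node M t (fst (f i)) (snd (f i)) \<and> (\<exists>j. step (f i) j (f (Suc i)))"
  proof (rule dependent_nat_choice)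
    show "\<exists>x. falsified_node M t (fst x) (snd x)"
      using assms(2) by auto
    show "\<exists>y. falsified_node M t (fst y) (snd y) \<and> (\<exists>j. step x j y)"
      if "falsified_node M t (fst x) (snd x)" for x :: "nat list \<times> 'w" and i :: nat
      using falsified_node_successor[OF pp that] unfolding step_def by fastforce
  qed
  then obtain f where "\<forall>i. \<exists>j. step (f i) j (f (Suc i))" by blast
  then obtain js where "\<And>i. step (f i) (js i) (f (Suc i))" by metis
  then show ?thesis
    unfolding step_def is_path_def by (intro exI[of _ "fst \<circ> f"] exI[of _ js] exI[of _ "snd \<circ> f"]) auto
qed

lemma eventually_antitone_nat_not_frequently_descending:
  fixes f :: "nat \<Rightarrow> nat"
  assumes antitone: "\<And>i. k \<le> i \<Longrightarrow> f (Suc i) \<le> f i"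
  shows "\<not> (\<exists>\<^sub>\<infinity>i. f (Suc i) < f i)"
proof
  assume "\<exists>\<^sub>\<infinity>i. f (Suc i) < f i"
  obtain i where "k \<le> i" and least: "\<And>j. k \<le> j \<Longrightarrow> f i \<le> f j"
    using ex_has_least_nat[of "\<lambda>j. k \<le> j" k f] by auto
  from \<open>\<exists>\<^sub>\<infinity>i. f (Suc i) < f i\<close> obtain n where "i \<le> n" "f (Suc n) < f n"
    unfolding cofinite_eq_sequentially frequently_sequentially by blast
  from \<open>i \<le> n\<close> have "f n \<le> f i"
  proof (induction n rule: dec_induct)
    case (step m)
    with antitone[of m] \<open>k \<le> i\<close> show ?case by simp
  qed simp
  with \<open>f (Suc n) < f n\<close> least[of "Suc n"] \<open>k \<le> i\<close> \<open>i \<le> n\<close> show False by simp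
qed

lemma descending_path_not_inf_progressing:
  assumes desc: "\<forall>i. descending_step M (node_rule t (ps i)) (js i) (snd (node_seq t (ps i))) (ws i) (ws (Suc i))"
    and trace: "is_trace t ps js k \<tau>"
  shows "\<not> inf_progressing t ps js \<tau>"
proof
  assume "inf_progressing t ps js \<tau>"
  define f where "f i = rank M (\<tau> i) (ws i)" for i
  have f_step: "f (Suc i) \<le> f i \<and> (progress (node_rule t (ps i)) (js i) (\<tau> i) (\<tau> (Suc i)) \<longrightarrow> f (Suc i) < f i)"
    if "k \<le> i" for i
    using trace desc that unfolding is_trace_def descending_step_def f_def by blast
  from \<open>inf_progressing t ps js \<tau>\<close> have "\<exists>\<^sub>\<infinity>i. f (Suc i) < f i"
    unfolding inf_progressing_def cofinite_eq_sequentially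
    by (rule frequently_rev_mp) (use f_step in \<open>auto simp: eventually_sequentially\<close>)
  with f_step show False
    using eventually_antitone_nat_not_frequently_descending by blast
qed

theorem mainTheorem5:
  fixes \<Gamma> \<Delta> :: "('p,'a) fm set"
  assumes "finite \<Gamma>" and "finite \<Delta>" and "provable (\<Gamma>, \<Delta>)"
  shows "\<forall>M :: ('a,'p,'w) model. valid_seq M (\<Gamma>, \<Delta>)"
proof (intro allI, rule ccontr)
  fix M :: "('a,'p,'w) model"
  assume "\<not> valid_seq M (\<Gamma>, \<Delta>)"
  then obtain w where "falsified M (\<Gamma>, \<Delta>) w"
    by (auto simp: valid_seq_def falsified_def)
  from assms(3) obtain t C where pp: "is_preproof t C" and "seq_of t = (\<Gamma>, \<Delta>)"
    and gtc: "global_trace_condition t C"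
    by (auto simp: provable_def is_proof_def)
  with \<open>falsified M (\<Gamma>, \<Delta>) w\<close> have "falsified_node M t [] w"
    by (intro falsified_node_root) simp_all
  with pp obtain ps js ws where path: "is_path t C ps js" and desc:
    "\<forall>i. descending_step M (node_rule t (ps i)) (js i) (snd (node_seq t (ps i))) (ws i) (ws (Suc i))"
    by (blast dest: falsified_node_infinite_path)
  from gtc path obtain k \<tau> where "is_trace t ps js k \<tau>" and "inf_progressing t ps js \<tau>"
    unfolding global_trace_condition_def by blast
  with desc show False
    using descending_path_not_inf_progressing by blast
qed

end
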